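(* Let $(\mathcal{A},m)$ be a multiarrangement and $H_0\in\mathcal{A}$. Then $(\mathcal{A},m+k\delta_{H_0})$ has a good summand to $H_0$ for all sufficiently large integers $k$.
   Context: Let $\mathbb{K}$ be a field, $S=\mathbb{K}[x_1,\dots,x_\ell]$. A multiarrangement $(\mathcal{A},m)$ is a finite set of linear hyperplanes $H=\ker\alpha_H$ of $\mathbb{K}^\ell$ with multiplicity $m:\mathcal{A}\to\mathbb{Z}_{>0}$. $D(\mathcal{A},m)=\{\theta\in\mathrm{Der}_{\mathbb{K}}(S):\theta(\alpha_H)\in\alpha_H^{m(H)}S\ \forall H\}$. $\delta_{H_0}$ is the function on $\mathcal{A}$ equal to $1$ at $H_0$ and $0$ elsewhere. A good summand to $H_0$ for $(\mathcal{A},m)$ is a homogeneous $\theta_0\in D(\mathcal{A},m)$ with all $\theta_0(x_i)$ zero or homogeneous of degree $m(H_0)$, and $\theta_0(\alpha_{H_0})=\alpha_{H_0}^{m(H_0)}$. *)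

theory Defs
  imports "HOL-Library.Poly_Mapping"
begin

text \<open>Multivariate polynomials over a field: finitely supported maps from monomials
  (exponent vectors) to coefficients. Variable x_i corresponds to index i;
  the ring S = K[x_0,...,x_(l-1)] is the set of polynomials only involving variables i < l.\<close>

type_synonym 'a mpoly = "(nat \<Rightarrow>\<^sub>0 nat) \<Rightarrow>\<^sub>0 'a"

definition in_S :: "nat \<Rightarrow> 'a::field mpoly \<Rightarrow> bool" where
  "in_S l p \<longleftrightarrow> (\<forall>t::nat \<Rightarrow>\<^sub>0 nat. t \<in> Poly_Mapping.keys p \<longrightarrow> Poly_Mapping.keys t \<subseteq> {..<l})"

definition mdeg :: "(nat \<Rightarrow>\<^sub>0 nat) \<Rightarrow> nat" where
  "mdeg t = (\<Sum>i\<in>Poly_Mapping.keys t. Poly_Mapping.lookup t i)"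

text \<open>Homogeneous of degree d (the zero polynomial counts as homogeneous of every degree).\<close>
definition homog :: "nat \<Rightarrow> 'a::field mpoly \<Rightarrow> bool" where
  "homog d p \<longleftrightarrow> (\<forall>t::nat \<Rightarrow>\<^sub>0 nat. t \<in> Poly_Mapping.keys p \<longrightarrow> mdeg t = d)"

definition var :: "nat \<Rightarrow> 'a::field mpoly" where
  "var i = Poly_Mapping.single (Poly_Mapping.single i 1) 1"

definition const :: "'a::field \<Rightarrow> 'a mpoly" where
  "const c = Poly_Mapping.single 0 c"

definition linform :: "nat \<Rightarrow> (nat \<Rightarrow> 'a::field) \<Rightarrow> 'a mpoly" where
  "linform l a = (\<Sum>i<l. const (a i) * var i)"

text \<open>A K-derivation of S is determined by its values theta(x_i), i < l; we represent it
  by the function i \<mapsto> theta(x_i), which is zero outside {..<l}.\<close>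
definition is_der :: "nat \<Rightarrow> (nat \<Rightarrow> 'a::field mpoly) \<Rightarrow> bool" where
  "is_der l \<theta> \<longleftrightarrow> (\<forall>i<l. in_S l (\<theta> i)) \<and> (\<forall>i\<ge>l. \<theta> i = 0)"

definition der_lin :: "nat \<Rightarrow> (nat \<Rightarrow> 'a::field mpoly) \<Rightarrow> (nat \<Rightarrow> 'a) \<Rightarrow> 'a mpoly" where
  "der_lin l \<theta> a = (\<Sum>i<l. const (a i) * \<theta> i)"

definition dvd_S :: "nat \<Rightarrow> 'a::field mpoly \<Rightarrow> 'a mpoly \<Rightarrow> bool" where
  "dvd_S l p q \<longleftrightarrow> (\<exists>r. in_S l r \<and> q = p * r)"

text \<open>A multiarrangement in K^l: a finite set A of hyperplane labels, each H with defining
  linear form alpha H (a nonzero covector supported on {..<l}), distinct labels giving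
  distinct hyperplanes (non-proportional forms), and a positive multiplicity m.\<close>
definition multiarr :: "nat \<Rightarrow> 'h set \<Rightarrow> ('h \<Rightarrow> nat \<Rightarrow> 'a::field) \<Rightarrow> ('h \<Rightarrow> nat) \<Rightarrow> bool" where
  "multiarr l A \<alpha> m \<longleftrightarrow> finite A \<and>
     (\<forall>H\<in>A. (\<forall>i\<ge>l. \<alpha> H i = 0) \<and> (\<exists>i<l. \<alpha> H i \<noteq> 0) \<and> m H > 0) \<and>
     (\<forall>H\<in>A. \<forall>H'\<in>A. H \<noteq> H' \<longrightarrow> (\<forall>c. \<alpha> H \<noteq> (\<lambda>i. c * \<alpha> H' i)))"

definition in_D :: "nat \<Rightarrow> 'h set \<Rightarrow> ('h \<Rightarrow> nat \<Rightarrow> 'a::field) \<Rightarrow> ('h \<Rightarrow> nat) \<Rightarrow> (nat \<Rightarrow> 'a mpoly) \<Rightarrow> bool" where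
  "in_D l A \<alpha> m \<theta> \<longleftrightarrow> is_der l \<theta> \<and>
     (\<forall>H\<in>A. dvd_S l (linform l (\<alpha> H) ^ m H) (der_lin l \<theta> (\<alpha> H)))"

definition good_summand :: "nat \<Rightarrow> 'h set \<Rightarrow> ('h \<Rightarrow> nat \<Rightarrow> 'a::field) \<Rightarrow> ('h \<Rightarrow> nat) \<Rightarrow> 'h \<Rightarrow> (nat \<Rightarrow> 'a mpoly) \<Rightarrow> bool" where
  "good_summand l A \<alpha> m H0 \<theta> \<longleftrightarrow> in_D l A \<alpha> m \<theta> \<and>
     (\<forall>i<l. homog (m H0) (\<theta> i)) \<and>
     der_lin l \<theta> (\<alpha> H0) = linform l (\<alpha> H0) ^ m H0"

definition delta :: "'h \<Rightarrow> 'h \<Rightarrow> nat" where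
  "delta H0 H = (if H = H0 then 1 else 0)"

end

theory Submission
  imports Defs
begin

text \<open>For a point p with \<open>\<alpha>\<^sub>0(p) = 1\<close> put \<open>F\<^sub>p = \<Prod> \<alpha>\<^sub>H ^ m(H)\<close> over the hyperplanes
  \<open>H \<noteq> H\<^sub>0\<close> not passing through p. The constant derivation in direction p, multiplied by \<open>F\<^sub>p\<close>,
  lies in \<open>D(\<A> - {H\<^sub>0}, m)\<close> and sends \<open>\<alpha>\<^sub>0\<close> to \<open>F\<^sub>p\<close>. Hence it suffices to show that some power
  \<open>\<alpha>\<^sub>0\<^sup>M\<close> lies in the ideal generated by the \<open>F\<^sub>p\<close> (with homogeneous coefficients); multiplying
  the resulting derivation by \<open>\<alpha>\<^sub>0\<^sup>k\<^sup>-\<^sup>M\<close> gives a good summand for every \<open>k \<ge> M\<close>.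

  The ideal statement is proved by induction on the set of hyperplanes, strengthened by
  linear constraints \<open>g(p) = 0\<close> for g in a finite set G, together with the products of N forms
  from G as extra generators. For a new hyperplane \<open>H = ker h\<close>, the relation for the smaller
  set multiplied by \<open>h\<^sup>m\<^sup>(\<^sup>H\<^sup>)\<close> is a relation for the larger one, while the relation with h added
  to the constraints is one for the larger set up to the extra generator \<open>h\<^sup>m\<^sup>(\<^sup>H\<^sup>)\<close> (a product
  of \<open>N + m(H)\<close> forms from \<open>G \<union> {h}\<close> contains \<open>h\<^sup>m\<^sup>(\<^sup>H\<^sup>)\<close> or N forms from G); substituting
  the first relation into the second eliminates the generator \<open>h\<^sup>m\<^sup>(\<^sup>H\<^sup>)\<close>. When no
  hyperplane is left, either \<open>\<alpha>\<^sub>0\<close> is a combination of G (so \<open>\<alpha>\<^sub>0\<^sup>N\<close> is a combination of N-fold products) or some p with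
  \<open>\<alpha>\<^sub>0(p) = 1\<close> satisfies the constraints and \<open>F\<^sub>p = 1\<close>.\<close>

lemma mdeg_eq_sum:
  assumes "finite K" "Poly_Mapping.keys t \<subseteq> K"
  shows "mdeg t = (\<Sum>i\<in>K. Poly_Mapping.lookup t i)"
  unfolding mdeg_def
  by (rule sum.mono_neutral_left) (use assms in \<open>auto simp: in_keys_iff\<close>)

lemma mdeg_add: "mdeg (s + t) = mdeg s + mdeg t"
proof -
  let ?K = "Poly_Mapping.keys s \<union> Poly_Mapping.keys t"
  have "mdeg (s + t) = (\<Sum>i\<in>?K. Poly_Mapping.lookup (s + t) i)"
    by (rule mdeg_eq_sum) (use keys_add[of s t] in auto)
  also have "\<dots> = (\<Sum>i\<in>?K. Poly_Mapping.lookup s i) + (\<Sum>i\<in>?K. Poly_Mapping.lookup t i)"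
    by (simp add: lookup_add sum.distrib)
  also have "\<dots> = mdeg s + mdeg t"
    by (simp add: mdeg_eq_sum[symmetric])
  finally show ?thesis .
qed

lemma homog_zero [simp]: "homog d 0"
  by (simp add: homog_def)

lemma homog_add: "homog d p \<Longrightarrow> homog d q \<Longrightarrow> homog d (p + q)"
  unfolding homog_def using keys_add[of p q] by (meson UnE subsetD)

lemma homog_mult: "homog a p \<Longrightarrow> homog b q \<Longrightarrow> homog (a + b) (p * q)"
  unfolding homog_def using keys_mult[of p q] by (force simp: mdeg_add)

lemma homog_const [simp]: "homog 0 (const c)"
  by (simp add: homog_def const_def mdeg_def)

lemma homog_one [simp]: "homog 0 1"
  by (simp add: homog_def mdeg_def)

lemma homog_var [simp]: "homog 1 (var i)"
  by (simp add: homog_def var_def mdeg_def)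

lemma homog_sum: "(\<And>i. i \<in> I \<Longrightarrow> homog d (f i)) \<Longrightarrow> homog d (\<Sum>i\<in>I. f i)"
  by (induction I rule: infinite_finite_induct) (auto intro: homog_add)

lemma homog_power: "homog d p \<Longrightarrow> homog (n * d) (p ^ n)"
  by (induction n) (auto dest: homog_mult[of d p])

lemma homog_linform [simp]: "homog 1 (linform l a)"
  unfolding linform_def by (rule homog_sum) (metis add_0 homog_const homog_mult homog_var)

lemma homog_linform_Suc [simp]: "homog (Suc 0) (linform l a)"
  using homog_linform by simp

lemma homog_linform_power: "homog k (linform l a ^ k)"
  using homog_power[OF homog_linform[of l a], of k] by simp

lemma homog_unique: "homog d p \<Longrightarrow> homog e p \<Longrightarrow> p \<noteq> 0 \<Longrightarrow> d = e"
  unfolding homog_def by (metis keys_eq_empty ex_in_conv)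

lemma in_S_zero [simp]: "in_S l 0"
  by (simp add: in_S_def)

lemma in_S_one [simp]: "in_S l 1"
  by (simp add: in_S_def)

lemma in_S_add: "in_S l p \<Longrightarrow> in_S l q \<Longrightarrow> in_S l (p + q)"
  unfolding in_S_def using keys_add[of p q] by (meson UnE subsetD)

lemma in_S_mult: "in_S l p \<Longrightarrow> in_S l q \<Longrightarrow> in_S l (p * q)"
  unfolding in_S_def using keys_mult[of p q] keys_add by fastforce

lemma in_S_const [simp]: "in_S l (const c)"
  by (simp add: in_S_def const_def)

lemma in_S_var: "i < l \<Longrightarrow> in_S l (var i)"
  by (simp add: in_S_def var_def)

lemma in_S_sum: "(\<And>i. i \<in> I \<Longrightarrow> in_S l (f i)) \<Longrightarrow> in_S l (\<Sum>i\<in>I. f i)"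
  by (induction I rule: infinite_finite_induct) (auto intro: in_S_add)

lemma in_S_prod: "(\<And>i. i \<in> I \<Longrightarrow> in_S l (f i)) \<Longrightarrow> in_S l (\<Prod>i\<in>I. f i)"
  by (induction I rule: infinite_finite_induct) (auto intro: in_S_mult)

lemma in_S_power: "in_S l p \<Longrightarrow> in_S l (p ^ n)"
  by (induction n) (auto intro: in_S_mult)

lemma in_S_linform [simp]: "in_S l (linform l a)"
  unfolding linform_def by (rule in_S_sum) (auto intro: in_S_mult in_S_var)

lemma const_zero [simp]: "const 0 = 0"
  by (simp add: const_def)

lemma const_one [simp]: "const 1 = 1"
  by (simp add: const_def)

lemma const_add: "const (a + b) = const a + const b"
  by (simp add: const_def single_add)

lemma const_mult: "const (a * b) = const a * const b"
  by (simp add: const_def mult_single)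

lemma const_sum: "const (\<Sum>i\<in>I. f i) = (\<Sum>i\<in>I. const (f i))"
  by (induction I rule: infinite_finite_induct) (auto simp: const_add)

definition lin_eval :: "nat \<Rightarrow> (nat \<Rightarrow> 'a::field) \<Rightarrow> (nat \<Rightarrow> 'a) \<Rightarrow> 'a" where
  "lin_eval l a p = (\<Sum>i<l. a i * p i)"

definition in_span :: "nat \<Rightarrow> (nat \<Rightarrow> 'a::field) set \<Rightarrow> (nat \<Rightarrow> 'a) \<Rightarrow> bool" where
  "in_span l G a \<longleftrightarrow> (\<exists>\<mu>. \<forall>i<l. a i = (\<Sum>g\<in>G. \<mu> g * g i))"

lemma lin_eval_diff_left: "lin_eval l (\<lambda>i. a i - c * b i) p = lin_eval l a p - c * lin_eval l b p"
  by (simp add: lin_eval_def algebra_simps sum_subtractf sum_distrib_left)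

lemma lin_eval_diff_right: "lin_eval l a (\<lambda>i. p i - c * q i) = lin_eval l a p - c * lin_eval l a q"
  by (simp add: lin_eval_def algebra_simps sum_subtractf sum_distrib_left)

lemma lin_eval_in_span:
  assumes "in_span l G a" "\<forall>g\<in>G. lin_eval l g p = 0"
  shows "lin_eval l a p = 0"
proof -
  obtain \<mu> where \<mu>: "\<forall>i<l. a i = (\<Sum>g\<in>G. \<mu> g * g i)"
    using assms(1) unfolding in_span_def by blast
  have "lin_eval l a p = (\<Sum>i<l. (\<Sum>g\<in>G. \<mu> g * g i) * p i)"
    unfolding lin_eval_def using \<mu> by (intro sum.cong) auto
  also have "\<dots> = (\<Sum>g\<in>G. \<mu> g * lin_eval l g p)"
    by (simp add: lin_eval_def sum_distrib_left sum_distrib_right sum.swap[of _ G] mult.assoc)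
  also have "\<dots> = 0"
    using assms(2) by simp
  finally show ?thesis .
qed

lemma in_span_insert:
  assumes "in_span l G (\<lambda>i. a i - c * g i)" "finite G" "g \<notin> G"
  shows "in_span l (insert g G) a"
proof -
  obtain \<mu> where \<mu>: "\<forall>i<l. a i - c * g i = (\<Sum>g'\<in>G. \<mu> g' * g' i)"
    using assms(1) unfolding in_span_def by blast
  have "a i = (\<Sum>g'\<in>insert g G. (\<mu>(g := c)) g' * g' i)" if "i < l" for i
  proof -
    have "(\<Sum>g'\<in>G. (\<mu>(g := c)) g' * g' i) = (\<Sum>g'\<in>G. \<mu> g' * g' i)"
      using assms(3) by (intro sum.cong) auto
    then show ?thesis
      using \<mu> that assms(2,3) by (simp add: algebra_simps)
  qed
  then show ?thesis
    unfolding in_span_def by blast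
qed

lemma exists_point_insert:
  assumes "lin_eval l g q = 1" "\<forall>g'\<in>G. lin_eval l g' q = 0"
    and "lin_eval l (\<lambda>i. a i - lin_eval l a q * g i) r = 1" "\<forall>g'\<in>G. lin_eval l g' r = 0"
  shows "\<exists>p. lin_eval l a p = 1 \<and> (\<forall>g'\<in>insert g G. lin_eval l g' p = 0)"
proof (intro exI conjI)
  let ?p = "\<lambda>i. r i - lin_eval l g r * q i"
  show "lin_eval l a ?p = 1"
    using assms(3) unfolding lin_eval_diff_right lin_eval_diff_left by (simp add: algebra_simps)
  show "\<forall>g'\<in>insert g G. lin_eval l g' ?p = 0"
    unfolding lin_eval_diff_right using assms(1,2,4) by simp
qed

lemma fredholm_alternative:
  assumes "finite G"
  shows "(\<exists>p. lin_eval l a p = 1 \<and> (\<forall>g\<in>G. lin_eval l g p = 0)) \<or> in_span l G a"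
  using assms
proof (induction G arbitrary: a rule: finite_induct)
  case empty
  show ?case
  proof (cases "\<forall>i<l. a i = 0")
    case True
    then show ?thesis by (simp add: in_span_def)
  next
    case False
    then obtain i where i: "i < l" "a i \<noteq> 0" by auto
    let ?p = "\<lambda>j. if j = i then inverse (a i) else 0"
    have "lin_eval l a ?p = (\<Sum>j<l. if j = i then a j * inverse (a i) else 0)"
      unfolding lin_eval_def by (rule sum.cong) auto
    also have "\<dots> = 1"
      using i by simp
    finally show ?thesis by auto
  qed
next
  case (insert g G)
  show ?case
  proof (cases "in_span l G g")
    case True
    with insert.IH[of a] show ?thesis
      using lin_eval_in_span[OF True] in_span_insert[of l G a 0 g] insert.hyps by auto
  next
    case False
    with insert.IH[of g] obtain q where q: "lin_eval l g q = 1" "\<forall>g'\<in>G. lin_eval l g' q = 0"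
      by auto
    define c where "c = lin_eval l a q"
    from insert.IH[of "\<lambda>i. a i - c * g i"] show ?thesis
    proof
      assume "\<exists>r. lin_eval l (\<lambda>i. a i - c * g i) r = 1 \<and> (\<forall>g'\<in>G. lin_eval l g' r = 0)"
      then show ?thesis
        using exists_point_insert[OF q] unfolding c_def by blast
    next
      assume "in_span l G (\<lambda>i. a i - c * g i)"
      then show ?thesis
        using in_span_insert insert.hyps by blast
    qed
  qed
qed

fun lin_prods :: "nat \<Rightarrow> nat \<Rightarrow> (nat \<Rightarrow> 'a::field) set \<Rightarrow> 'a mpoly set" where
  "lin_prods l 0 G = {1}"
| "lin_prods l (Suc n) G = {linform l g * q | g q. g \<in> G \<and> q \<in> lin_prods l n G}"

lemma lin_prods_homog: "x \<in> lin_prods l n G \<Longrightarrow> homog n x \<and> in_S l x"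
proof (induction n arbitrary: x)
  case 0
  then show ?case by simp
next
  case (Suc n)
  then obtain g q where "x = linform l g * q" "q \<in> lin_prods l n G" by auto
  moreover have "homog (1 + n) (linform l g * q)"
    by (rule homog_mult) (use Suc.IH[OF \<open>q \<in> lin_prods l n G\<close>] in auto)
  ultimately show ?case
    using Suc.IH[of q] by (auto intro: in_S_mult)
qed

lemma lin_prods_split:
  assumes "x \<in> lin_prods l n (insert h G)" "a + b \<le> n"
  shows "(\<exists>r\<in>lin_prods l (n - a) (insert h G). x = linform l h ^ a * r) \<or>
    (\<exists>q\<in>lin_prods l b G. \<exists>r\<in>lin_prods l (n - b) (insert h G). x = q * r)"
  using assms
proof (induction n arbitrary: x a b)
  case 0
  then show ?case by simp
next
  case (Suc n)
  then obtain g q where x: "x = linform l g * q" "q \<in> lin_prods l n (insert h G)" "g \<in> insert h G"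
    by auto
  consider "a = 0" | "b = 0" | a' where "g = h" "a = Suc a'" | b' where "g \<in> G" "b = Suc b'"
    using x(3) by (metis insertE not0_implies_Suc)
  then show ?case
  proof cases
    case 1
    then show ?thesis using Suc.prems by auto
  next
    case 2
    then show ?thesis using Suc.prems by auto
  next
    case (3 a')
    with Suc.prems have "a' + b \<le> n" by simp
    from Suc.IH[OF x(2) this] show ?thesis
    proof (elim disjE bexE)
      fix r assume "r \<in> lin_prods l (n - a') (insert h G)" "q = linform l h ^ a' * r"
      then show ?thesis
        using x 3 \<open>a' + b \<le> n\<close> by (intro disjI1 bexI[of _ r]) (auto simp: Suc_diff_le)
    next
      fix q' r assume "q' \<in> lin_prods l b G" "r \<in> lin_prods l (n - b) (insert h G)" "q = q' * r"
      then show ?thesis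
        using x 3 \<open>a' + b \<le> n\<close>
        by (intro disjI2 bexI[of _ q'] bexI[of _ "linform l h * r"]) (auto simp: Suc_diff_le ac_simps)
    qed
  next
    case (4 b')
    with Suc.prems have "a + b' \<le> n" by simp
    from Suc.IH[OF x(2) this] show ?thesis
    proof (elim disjE bexE)
      fix r assume "r \<in> lin_prods l (n - a) (insert h G)" "q = linform l h ^ a * r"
      then show ?thesis
        using x 4 \<open>a + b' \<le> n\<close>
        by (intro disjI1 bexI[of _ "linform l g * r"]) (auto simp: Suc_diff_le ac_simps)
    next
      fix q' r assume "q' \<in> lin_prods l b' G" "r \<in> lin_prods l (n - b') (insert h G)" "q = q' * r"
      then show ?thesis
        using x 4 by (intro disjI2 bexI[of _ "linform l g * q'"] bexI[of _ r]) (auto simp: ac_simps)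
    qed
  qed
qed

text \<open>Membership in the degree d part of the ideal of S generated by G, witnessed with
  homogeneous coefficients.\<close>

inductive hcomb :: "nat \<Rightarrow> 'a::field mpoly set \<Rightarrow> nat \<Rightarrow> 'a mpoly \<Rightarrow> bool" for l G where
  hcomb_zero: "hcomb l G d 0"
| hcomb_term: "g \<in> G \<Longrightarrow> homog e c \<Longrightarrow> in_S l c \<Longrightarrow> homog d (c * g) \<Longrightarrow> hcomb l G d (c * g)"
| hcomb_add: "hcomb l G d x \<Longrightarrow> hcomb l G d y \<Longrightarrow> hcomb l G d (x + y)"

lemma hcomb_homog: "hcomb l G d x \<Longrightarrow> homog d x"
  by (induction rule: hcomb.induct) (auto intro: homog_add)

lemma hcomb_change_degree: "hcomb l G d x \<Longrightarrow> homog d' x \<Longrightarrow> hcomb l G d' x"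
  by (metis hcomb_zero hcomb_homog homog_unique)

lemma hcomb_generator: "g \<in> G \<Longrightarrow> homog d g \<Longrightarrow> hcomb l G d g"
  using hcomb_term[of g G 0 1 l d] by simp

lemma hcomb_sum: "finite I \<Longrightarrow> (\<And>i. i \<in> I \<Longrightarrow> hcomb l G d (f i)) \<Longrightarrow> hcomb l G d (\<Sum>i\<in>I. f i)"
  by (induction I rule: finite_induct) (auto intro: hcomb_zero hcomb_add)

lemma hcomb_mult_transfer:
  assumes "hcomb l G d x" "homog e y" "in_S l y"
    and "\<And>g. g \<in> G \<Longrightarrow> \<exists>a\<in>G'. \<exists>r e'. homog e' r \<and> in_S l r \<and> y * g = r * a"
  shows "hcomb l G' (e + d) (y * x)"
  using assms(1)
proof (induction rule: hcomb.induct)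
  case hcomb_zero
  then show ?case by (simp add: hcomb.hcomb_zero)
next
  case (hcomb_term g e1 c d)
  then obtain a r e' where ar: "a \<in> G'" "homog e' r" "in_S l r" "y * g = r * a"
    using assms(4) by blast
  have eq: "y * (c * g) = (c * r) * a"
    using ar(4) by (metis mult.assoc mult.left_commute)
  have "homog (e + d) (y * (c * g))"
    using homog_mult[OF assms(2) hcomb_term(4)] .
  then show ?case
    unfolding eq using hcomb.hcomb_term[OF ar(1) homog_mult[OF hcomb_term(2) ar(2)]]
      in_S_mult[OF hcomb_term(3) ar(3)] eq by simp
next
  case (hcomb_add d x1 x2)
  then show ?case by (simp add: distrib_left hcomb.hcomb_add)
qed

lemma hcomb_mult: "hcomb l G d x \<Longrightarrow> homog e y \<Longrightarrow> in_S l y \<Longrightarrow> hcomb l G (e + d) (y * x)"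
  by (erule hcomb_mult_transfer) auto

lemma hcomb_transfer:
  assumes "hcomb l G d x"
    and "\<And>g. g \<in> G \<Longrightarrow> \<exists>a\<in>G'. \<exists>r e. homog e r \<and> in_S l r \<and> g = r * a"
  shows "hcomb l G' d x"
  using hcomb_mult_transfer[OF assms(1) homog_one in_S_one, of G'] assms(2) by simp

lemma hcomb_mono: "hcomb l G d x \<Longrightarrow> G \<subseteq> G' \<Longrightarrow> hcomb l G' d x"
  by (erule hcomb_transfer) (metis homog_one in_S_one mult_1 subsetD)

lemma hcomb_eliminate:
  assumes "hcomb l (insert z G) d x" "hcomb l G D (z * w)" "homog dw w" "in_S l w"
  shows "hcomb l G (dw + d) (w * x)"
  using assms(1)
proof (induction rule: hcomb.induct)
  case hcomb_zero
  then show ?case by (simp add: hcomb.hcomb_zero)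
next
  case (hcomb_term g e c d)
  have hom: "homog (dw + d) (w * (c * g))"
    using homog_mult[OF assms(3) hcomb_term(4)] .
  show ?case
  proof (cases "g = z")
    case True
    have "hcomb l G (e + D) (c * (z * w))"
      using hcomb_mult[OF assms(2) hcomb_term(2,3)] .
    moreover have "c * (z * w) = w * (c * g)"
      using True by (simp add: algebra_simps)
    ultimately show ?thesis
      using hom hcomb_change_degree by metis
  next
    case False
    then have "g \<in> G" using hcomb_term by auto
    have eq: "w * (c * g) = (w * c) * g" by (simp add: algebra_simps)
    show ?thesis
      unfolding eq using hcomb.hcomb_term[OF \<open>g \<in> G\<close> homog_mult[OF assms(3) hcomb_term(2)]
        in_S_mult[OF assms(4) hcomb_term(3)]] hom eq by simp
  qed
next
  case (hcomb_add d x1 x2)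
  then show ?case by (simp add: distrib_left hcomb.hcomb_add)
qed

lemma hcomb_prod:
  assumes "hcomb l G1 d1 x" "hcomb l G2 d2 y"
    and "\<And>a b. a \<in> G1 \<Longrightarrow> b \<in> G2 \<Longrightarrow> a * b \<in> G3"
    and "\<And>a. a \<in> G1 \<Longrightarrow> \<exists>e. homog e a \<and> in_S l a"
  shows "hcomb l G3 (d1 + d2) (x * y)"
  using assms(1)
proof (induction rule: hcomb.induct)
  case hcomb_zero
  then show ?case by (simp add: hcomb.hcomb_zero)
next
  case (hcomb_term a e c d1)
  obtain ea where ea: "homog ea a" "in_S l a"
    using assms(4)[OF hcomb_term(1)] by auto
  have "hcomb l G3 (ea + d2) (a * y)"
    by (rule hcomb_mult_transfer[OF assms(2) ea])
      (use assms(3)[OF hcomb_term(1)] in \<open>metis homog_one in_S_one mult_1\<close>)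
  then have "hcomb l G3 (e + (ea + d2)) (c * (a * y))"
    using hcomb_mult hcomb_term(2,3) by blast
  moreover have "homog (d1 + d2) (c * a * y)"
    using homog_mult[OF hcomb_term(4) hcomb_homog[OF assms(2)]] .
  ultimately show ?case
    using hcomb_change_degree by (metis mult.assoc)
next
  case (hcomb_add d x1 x2)
  then show ?case by (simp add: distrib_right hcomb.hcomb_add)
qed

lemma hcomb_power:
  assumes "hcomb l (lin_prods l 1 G) 1 x"
  shows "hcomb l (lin_prods l n G) n (x ^ n)"
proof (induction n)
  case 0
  show ?case using hcomb_generator[of 1 "lin_prods l 0 G" 0 l] by simp
next
  case (Suc n)
  have "hcomb l (lin_prods l (Suc n) G) (1 + n) (x * x ^ n)"
  proof (rule hcomb_prod[OF assms Suc])
    fix a b assume "a \<in> lin_prods l 1 G" "b \<in> lin_prods l n G"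
    then show "a * b \<in> lin_prods l (Suc n) G" by auto
  next
    fix a assume "a \<in> lin_prods l 1 G"
    then show "\<exists>e. homog e a \<and> in_S l a" using lin_prods_homog by blast
  qed
  then show ?case by simp
qed

lemma linform_in_span:
  assumes "finite G" "in_span l G a"
  shows "\<exists>\<mu>. linform l a = (\<Sum>g\<in>G. const (\<mu> g) * linform l g)"
proof -
  obtain \<mu> where \<mu>: "\<forall>i<l. a i = (\<Sum>g\<in>G. \<mu> g * g i)"
    using assms(2) unfolding in_span_def by blast
  have "linform l a = (\<Sum>i<l. const (\<Sum>g\<in>G. \<mu> g * g i) * var i)"
    unfolding linform_def using \<mu> by (intro sum.cong) auto
  also have "\<dots> = (\<Sum>i<l. \<Sum>g\<in>G. const (\<mu> g) * (const (g i) * var i))"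
    by (simp add: const_sum const_mult sum_distrib_right mult.assoc)
  also have "\<dots> = (\<Sum>g\<in>G. const (\<mu> g) * linform l g)"
    by (subst sum.swap) (simp add: linform_def sum_distrib_left)
  finally show ?thesis by blast
qed

lemma hcomb_linform_in_span:
  assumes "finite G" "in_span l G a"
  shows "hcomb l (lin_prods l 1 G) 1 (linform l a)"
proof -
  obtain \<mu> where \<mu>: "linform l a = (\<Sum>g\<in>G. const (\<mu> g) * linform l g)"
    using linform_in_span[OF assms] by blast
  have "hcomb l (lin_prods l 1 G) 1 (const (\<mu> g) * linform l g)" if "g \<in> G" for g
  proof -
    have gen: "linform l g * 1 \<in> lin_prods l 1 G"
      using that by auto
    have "homog (0 + 1) (const (\<mu> g) * (linform l g * 1))"
      by (rule homog_mult) auto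
    from hcomb_term[OF gen homog_const in_S_const this] show ?thesis
      by simp
  qed
  then show ?thesis
    unfolding \<mu> by (rule hcomb_sum[OF assms(1)])
qed

definition prod_off :: "nat \<Rightarrow> ('h \<Rightarrow> nat \<Rightarrow> 'a::field) \<Rightarrow> ('h \<Rightarrow> nat) \<Rightarrow> 'h set \<Rightarrow> (nat \<Rightarrow> 'a) \<Rightarrow> 'a mpoly"
  where "prod_off l \<alpha> m B p = (\<Prod>H\<in>{H\<in>B. lin_eval l (\<alpha> H) p \<noteq> 0}. linform l (\<alpha> H) ^ m H)"

definition prods_off :: "nat \<Rightarrow> ('h \<Rightarrow> nat \<Rightarrow> 'a::field) \<Rightarrow> ('h \<Rightarrow> nat) \<Rightarrow> (nat \<Rightarrow> 'a) \<Rightarrow> 'h set \<Rightarrow>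
    (nat \<Rightarrow> 'a) set \<Rightarrow> 'a mpoly set"
  where "prods_off l \<alpha> m a0 B G =
    {prod_off l \<alpha> m B p | p. lin_eval l a0 p = 1 \<and> (\<forall>g\<in>G. lin_eval l g p = 0)}"

lemma in_S_prod_off: "in_S l (prod_off l \<alpha> m B p)"
  unfolding prod_off_def by (auto intro!: in_S_prod in_S_power)

lemma prod_off_insert:
  assumes "finite B" "H \<notin> B"
  shows "prod_off l \<alpha> m (insert H B) p =
    (if lin_eval l (\<alpha> H) p \<noteq> 0 then linform l (\<alpha> H) ^ m H * prod_off l \<alpha> m B p
     else prod_off l \<alpha> m B p)"
proof (cases "lin_eval l (\<alpha> H) p \<noteq> 0")
  case True
  then have "{H'\<in>insert H B. lin_eval l (\<alpha> H') p \<noteq> 0} = insert H {H'\<in>B. lin_eval l (\<alpha> H') p \<noteq> 0}"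
    by auto
  then show ?thesis
    using True assms unfolding prod_off_def by simp
next
  case False
  then have "{H'\<in>insert H B. lin_eval l (\<alpha> H') p \<noteq> 0} = {H'\<in>B. lin_eval l (\<alpha> H') p \<noteq> 0}"
    by auto
  then show ?thesis
    using False unfolding prod_off_def by simp
qed

lemma hcomb_prods_off_insert:
  assumes "hcomb l (prods_off l \<alpha> m a0 B G \<union> lin_prods l N G) d x" "finite B" "H \<notin> B"
  shows "hcomb l (prods_off l \<alpha> m a0 (insert H B) G \<union> lin_prods l N G) (m H + d)
    (linform l (\<alpha> H) ^ m H * x)"
proof (rule hcomb_mult_transfer[OF assms(1) homog_linform_power in_S_power[OF in_S_linform]])
  let ?hh = "linform l (\<alpha> H) ^ m H"
  let ?G' = "prods_off l \<alpha> m a0 (insert H B) G \<union> lin_prods l N G"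
  fix g assume "g \<in> prods_off l \<alpha> m a0 B G \<union> lin_prods l N G"
  then show "\<exists>a\<in>?G'. \<exists>r e. homog e r \<and> in_S l r \<and> ?hh * g = r * a"
  proof
    assume "g \<in> prods_off l \<alpha> m a0 B G"
    then obtain p where p: "g = prod_off l \<alpha> m B p" "lin_eval l a0 p = 1" "\<forall>g\<in>G. lin_eval l g p = 0"
      unfolding prods_off_def by auto
    have mem: "prod_off l \<alpha> m (insert H B) p \<in> ?G'"
      unfolding prods_off_def using p by auto
    show ?thesis
    proof (cases "lin_eval l (\<alpha> H) p \<noteq> 0")
      case True
      then have "?hh * g = 1 * prod_off l \<alpha> m (insert H B) p"
        using p(1) prod_off_insert[OF assms(2,3), of l \<alpha> m p] by simp
      then show ?thesis
        using mem homog_one in_S_one by blast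
    next
      case False
      then have "?hh * g = ?hh * prod_off l \<alpha> m (insert H B) p"
        using p(1) prod_off_insert[OF assms(2,3), of l \<alpha> m p] by simp
      then show ?thesis
        using mem homog_linform_power in_S_power[OF in_S_linform] by blast
    qed
  next
    assume "g \<in> lin_prods l N G"
    then show ?thesis
      using homog_linform_power in_S_power[OF in_S_linform]
      by (intro bexI[of _ g] exI[of _ ?hh]) (auto simp: mult.commute)
  qed
qed

lemma hcomb_prods_off_constrain:
  assumes "hcomb l (prods_off l \<alpha> m a0 B (insert (\<alpha> H) G) \<union> lin_prods l (N + m H) (insert (\<alpha> H) G)) d x"
    and "finite B" "H \<notin> B"
  shows "hcomb l (insert (linform l (\<alpha> H) ^ m H) (prods_off l \<alpha> m a0 (insert H B) G \<union> lin_prods l N G)) d x"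
proof (rule hcomb_transfer[OF assms(1)])
  let ?hh = "linform l (\<alpha> H) ^ m H"
  let ?G' = "insert ?hh (prods_off l \<alpha> m a0 (insert H B) G \<union> lin_prods l N G)"
  fix g assume "g \<in> prods_off l \<alpha> m a0 B (insert (\<alpha> H) G) \<union> lin_prods l (N + m H) (insert (\<alpha> H) G)"
  then show "\<exists>a\<in>?G'. \<exists>r e. homog e r \<and> in_S l r \<and> g = r * a"
  proof
    assume "g \<in> prods_off l \<alpha> m a0 B (insert (\<alpha> H) G)"
    then obtain p where p: "g = prod_off l \<alpha> m B p" "lin_eval l a0 p = 1"
        "lin_eval l (\<alpha> H) p = 0" "\<forall>g\<in>G. lin_eval l g p = 0"
      unfolding prods_off_def by auto
    then have "g = prod_off l \<alpha> m (insert H B) p"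
      using prod_off_insert[OF assms(2,3), of l \<alpha> m p] by simp
    moreover have "prod_off l \<alpha> m (insert H B) p \<in> ?G'"
      unfolding prods_off_def using p by auto
    ultimately show ?thesis
      by (metis homog_one in_S_one mult_1)
  next
    assume g: "g \<in> lin_prods l (N + m H) (insert (\<alpha> H) G)"
    have "(\<exists>r\<in>lin_prods l N (insert (\<alpha> H) G). g = ?hh * r) \<or>
        (\<exists>q\<in>lin_prods l N G. \<exists>r\<in>lin_prods l (m H) (insert (\<alpha> H) G). g = q * r)"
      using lin_prods_split[OF g, of "m H" N] by simp
    then show ?thesis
    proof (elim disjE bexE)
      fix r assume "r \<in> lin_prods l N (insert (\<alpha> H) G)" "g = ?hh * r"
      then show ?thesis
        using lin_prods_homog by (metis insertI1 mult.commute)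
    next
      fix q r assume "q \<in> lin_prods l N G" "r \<in> lin_prods l (m H) (insert (\<alpha> H) G)" "g = q * r"
      then show ?thesis
        using lin_prods_homog by (metis UnI2 insertI2 mult.commute)
    qed
  qed
qed

lemma linform_power_in_hcomb_prods_off:
  assumes "finite B" "finite G"
  shows "\<exists>M. hcomb l (prods_off l \<alpha> m a0 B G \<union> lin_prods l N G) M (linform l a0 ^ M)"
  using assms
proof (induction B arbitrary: G N rule: finite_induct)
  case empty
  from fredholm_alternative[OF empty.prems, of l a0] show ?case
  proof
    assume "\<exists>p. lin_eval l a0 p = 1 \<and> (\<forall>g\<in>G. lin_eval l g p = 0)"
    then have "1 \<in> prods_off l \<alpha> m a0 {} G"
      unfolding prods_off_def prod_off_def by auto
    then have "hcomb l (prods_off l \<alpha> m a0 {} G \<union> lin_prods l N G) 0 1"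
      by (intro hcomb_generator) auto
    then show ?thesis
      by (intro exI[of _ 0]) simp
  next
    assume "in_span l G a0"
    from hcomb_power[OF hcomb_linform_in_span[OF empty.prems this], of N] show ?thesis
      by (intro exI[of _ N]) (erule hcomb_mono, auto)
  qed
next
  case (insert H B)
  obtain M2 where "hcomb l (prods_off l \<alpha> m a0 B G \<union> lin_prods l N G) M2 (linform l a0 ^ M2)"
    using insert.IH[OF insert.prems] by blast
  from hcomb_prods_off_insert[OF this insert.hyps]
  have M2: "hcomb l (prods_off l \<alpha> m a0 (insert H B) G \<union> lin_prods l N G) (m H + M2)
      (linform l (\<alpha> H) ^ m H * linform l a0 ^ M2)" .
  obtain M1 where "hcomb l (prods_off l \<alpha> m a0 B (insert (\<alpha> H) G) \<union>
      lin_prods l (N + m H) (insert (\<alpha> H) G)) M1 (linform l a0 ^ M1)"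
    using insert.IH[of "insert (\<alpha> H) G" "N + m H"] insert.prems by blast
  from hcomb_prods_off_constrain[OF this insert.hyps]
  have "hcomb l (prods_off l \<alpha> m a0 (insert H B) G \<union> lin_prods l N G) (M2 + M1)
      (linform l a0 ^ M2 * linform l a0 ^ M1)"
    by (rule hcomb_eliminate[OF _ M2 homog_linform_power in_S_power[OF in_S_linform]])
  then show ?case
    by (metis power_add)
qed

definition scaled_dir :: "nat \<Rightarrow> 'a::field mpoly \<Rightarrow> (nat \<Rightarrow> 'a) \<Rightarrow> nat \<Rightarrow> 'a mpoly" where
  "scaled_dir l f p = (\<lambda>i. if i < l then f * const (p i) else 0)"

lemma der_lin_scaled_dir: "der_lin l (scaled_dir l f p) a = f * const (lin_eval l a p)"
proof -
  have "der_lin l (scaled_dir l f p) a = (\<Sum>i<l. f * const (a i * p i))"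
    unfolding der_lin_def scaled_dir_def by (intro sum.cong) (auto simp: const_mult algebra_simps)
  also have "\<dots> = f * const (lin_eval l a p)"
    by (simp add: lin_eval_def const_sum sum_distrib_left)
  finally show ?thesis .
qed

lemma der_lin_add: "der_lin l (\<lambda>i. \<theta>1 i + \<theta>2 i) a = der_lin l \<theta>1 a + der_lin l \<theta>2 a"
  by (simp add: der_lin_def distrib_left sum.distrib)

lemma der_lin_mult: "der_lin l (\<lambda>i. f * \<theta> i) a = f * der_lin l \<theta> a"
  by (simp add: der_lin_def sum_distrib_left algebra_simps)

lemma in_D_zero: "in_D l B \<alpha> m (\<lambda>_. 0)"
  by (auto simp: in_D_def is_der_def der_lin_def dvd_S_def intro: exI[of _ 0])

lemma dvd_S_add: "dvd_S l q x \<Longrightarrow> dvd_S l q y \<Longrightarrow> dvd_S l q (x + y)"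
  unfolding dvd_S_def by (metis distrib_left in_S_add)

lemma dvd_S_mult: "dvd_S l q x \<Longrightarrow> in_S l f \<Longrightarrow> dvd_S l q (f * x)"
  unfolding dvd_S_def by (metis in_S_mult mult.left_commute)

lemma in_D_add:
  assumes "in_D l B \<alpha> m \<theta>1" "in_D l B \<alpha> m \<theta>2"
  shows "in_D l B \<alpha> m (\<lambda>i. \<theta>1 i + \<theta>2 i)"
  using assms unfolding in_D_def is_der_def der_lin_add by (auto intro: in_S_add dvd_S_add)

lemma in_D_mult:
  assumes "in_D l B \<alpha> m \<theta>" "in_S l f"
  shows "in_D l B \<alpha> m (\<lambda>i. f * \<theta> i)"
  using assms unfolding in_D_def is_der_def der_lin_mult by (auto intro: in_S_mult dvd_S_mult)

text \<open>The derivation \<open>c F\<^sub>p \<partial>\<^sub>p\<close> lies in \<open>D(B, m)\<close>: it sends \<open>\<alpha>\<^sub>H\<close> to \<open>c F\<^sub>p \<alpha>\<^sub>H(p)\<close>, which vanishes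
  unless \<open>\<alpha>\<^sub>H\<^sup>m\<^sup>(\<^sup>H\<^sup>)\<close> is a factor of \<open>F\<^sub>p\<close>.\<close>

lemma in_D_scaled_dir_prod_off:
  assumes "finite B" "in_S l c"
  shows "in_D l B \<alpha> m (scaled_dir l (c * prod_off l \<alpha> m B p) p)"
  unfolding in_D_def
proof (intro conjI ballI)
  show "is_der l (scaled_dir l (c * prod_off l \<alpha> m B p) p)"
    unfolding is_der_def scaled_dir_def using assms(2) by (auto intro!: in_S_mult in_S_prod_off)
next
  fix H assume "H \<in> B"
  let ?S = "{H\<in>B. lin_eval l (\<alpha> H) p \<noteq> 0}"
  show "dvd_S l (linform l (\<alpha> H) ^ m H) (der_lin l (scaled_dir l (c * prod_off l \<alpha> m B p) p) (\<alpha> H))"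
  proof (cases "lin_eval l (\<alpha> H) p = 0")
    case True
    then show ?thesis
      unfolding der_lin_scaled_dir dvd_S_def by (intro exI[of _ 0]) simp
  next
    case False
    with \<open>H \<in> B\<close> have "H \<in> ?S" by simp
    then have "prod_off l \<alpha> m B p = linform l (\<alpha> H) ^ m H * (\<Prod>H'\<in>?S - {H}. linform l (\<alpha> H') ^ m H')"
      unfolding prod_off_def using assms(1) by (simp add: prod.remove)
    moreover have "in_S l (\<Prod>H'\<in>?S - {H}. linform l (\<alpha> H') ^ m H')"
      by (auto intro!: in_S_prod in_S_power)
    ultimately show ?thesis
      unfolding der_lin_scaled_dir dvd_S_def using assms(2)
      by (intro exI[of _ "c * (\<Prod>H'\<in>?S - {H}. linform l (\<alpha> H') ^ m H') * const (lin_eval l (\<alpha> H) p)"])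
        (auto intro!: in_S_mult simp: algebra_simps)
  qed
qed

lemma hcomb_prods_off_derivation:
  assumes "hcomb l (prods_off l \<alpha> m a0 B {}) d x" "finite B"
  shows "\<exists>\<theta>. in_D l B \<alpha> m \<theta> \<and> (\<forall>i<l. homog d (\<theta> i)) \<and> der_lin l \<theta> a0 = x"
  using assms(1)
proof (induction rule: hcomb.induct)
  case (hcomb_zero d)
  then show ?case
    using in_D_zero by (fastforce simp: der_lin_def)
next
  case (hcomb_term g e c d)
  then obtain p where p: "g = prod_off l \<alpha> m B p" "lin_eval l a0 p = 1"
    unfolding prods_off_def by auto
  let ?\<theta> = "scaled_dir l (c * g) p"
  have "in_D l B \<alpha> m ?\<theta>"
    unfolding p(1) by (rule in_D_scaled_dir_prod_off[OF assms(2) hcomb_term(3)])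
  moreover have "\<forall>i<l. homog d (?\<theta> i)"
    unfolding scaled_dir_def using homog_mult[OF hcomb_term(4) homog_const] by simp
  moreover have "der_lin l ?\<theta> a0 = c * g"
    by (simp add: der_lin_scaled_dir p(2))
  ultimately show ?case by blast
next
  case (hcomb_add d x y)
  then obtain \<theta>1 \<theta>2 where "in_D l B \<alpha> m \<theta>1" "\<forall>i<l. homog d (\<theta>1 i)" "der_lin l \<theta>1 a0 = x"
    and "in_D l B \<alpha> m \<theta>2" "\<forall>i<l. homog d (\<theta>2 i)" "der_lin l \<theta>2 a0 = y"
    by blast
  then show ?case
    by (intro exI[of _ "\<lambda>i. \<theta>1 i + \<theta>2 i"]) (auto simp: der_lin_add intro: in_D_add homog_add)
qed

lemma good_summand_multiple:
  assumes "in_D l (A - {H0}) \<alpha> m \<theta>" "\<forall>i<l. homog M (\<theta> i)"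
    and "der_lin l \<theta> (\<alpha> H0) = linform l (\<alpha> H0) ^ M" "M \<le> m H0"
  shows "good_summand l A \<alpha> m H0 (\<lambda>i. linform l (\<alpha> H0) ^ (m H0 - M) * \<theta> i)"
proof -
  let ?f = "linform l (\<alpha> H0) ^ (m H0 - M)"
  have D: "in_D l (A - {H0}) \<alpha> m (\<lambda>i. ?f * \<theta> i)"
    using in_D_mult[OF assms(1) in_S_power[OF in_S_linform]] .
  have H0: "der_lin l (\<lambda>i. ?f * \<theta> i) (\<alpha> H0) = linform l (\<alpha> H0) ^ m H0"
    using assms(3,4) by (simp add: der_lin_mult power_add[symmetric])
  have "homog (m H0 - M + M) (?f * \<theta> i)" if "i < l" for i
    using homog_mult[OF homog_linform_power] assms(2) that by blast
  then have "\<forall>i<l. homog (m H0) (?f * \<theta> i)"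
    using assms(4) by simp
  moreover have "dvd_S l (linform l (\<alpha> H0) ^ m H0) (der_lin l (\<lambda>i. ?f * \<theta> i) (\<alpha> H0))"
    unfolding H0 dvd_S_def by (intro exI[of _ 1]) simp
  ultimately show ?thesis
    using D H0 unfolding good_summand_def in_D_def by blast
qed

theorem proposition3p5:
  fixes A :: "'h set" and \<alpha> :: "'h \<Rightarrow> nat \<Rightarrow> 'a::field" and m :: "'h \<Rightarrow> nat"
    and l :: nat and H0 :: 'h
  assumes "multiarr l A \<alpha> m" and "H0 \<in> A"
  shows "\<exists>k0. \<forall>k\<ge>k0. \<exists>\<theta>. good_summand l A \<alpha> (\<lambda>H. m H + k * delta H0 H) H0 \<theta>"
proof -
  have fin: "finite (A - {H0})"
    using assms(1) by (simp add: multiarr_def)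
  obtain M where "hcomb l (prods_off l \<alpha> m (\<alpha> H0) (A - {H0}) {}) M (linform l (\<alpha> H0) ^ M)"
    using linform_power_in_hcomb_prods_off[OF fin finite.emptyI, of l \<alpha> m "\<alpha> H0" 1] by auto
  from hcomb_prods_off_derivation[OF this fin] obtain \<theta> where \<theta>: "in_D l (A - {H0}) \<alpha> m \<theta>"
    "\<forall>i<l. homog M (\<theta> i)" "der_lin l \<theta> (\<alpha> H0) = linform l (\<alpha> H0) ^ M"
    by blast
  have "\<exists>\<theta>. good_summand l A \<alpha> (\<lambda>H. m H + k * delta H0 H) H0 \<theta>" if "M \<le> k" for k
  proof -
    have D: "in_D l (A - {H0}) \<alpha> (\<lambda>H. m H + k * delta H0 H) \<theta>"
      using \<theta>(1) by (simp add: in_D_def delta_def)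
    have bound: "M \<le> m H0 + k * delta H0 H0"
      using that by (simp add: delta_def)
    show ?thesis
      by (rule exI, rule good_summand_multiple[OF D \<theta>(2,3) bound])
  qed
  then show ?thesis by blast
qed

end
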